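(* Let $L$ be any infinite context-free language over an alphabet $\Sigma$ with $|\Sigma|\geq 2$. Then there is a positive integer $m$ satisfying the following. Let $n\geq 2$ be an integer, let $S\subseteq L\cap\Sigma^n$, and let $j_0,k\in\{2,\ldots,n\}$ be indices such that $k\geq 2j_0$ and $|S_{i,u}|<|S|/\big(m(k-j_0+1)(n-j_0+1)\big)$ for every index $i\in\{1,\ldots,n-j_0\}$ and every string $u\in\Sigma^{j_0}$. Then there exist indices $i\in\{1,\ldots,n\}$ and $j\in\{j_0,\ldots,k\}$ with $i+j\leq n$, and two strings $x=x_1x_2x_3$ and $y=y_1y_2y_3$ in $S$ with $|x_1|=|y_1|=i$, $|x_2|=|y_2|=j$ and $|x_3|=|y_3|$, such that (i) $x_2\neq y_2$, (ii) $x_1y_2x_3\in L$, and (iii) $y_1x_2y_3\in L$.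
   Context: $\Sigma^n$ denotes the set of strings of length exactly $n$ over $\Sigma$. For a string $x$ of length $n$ and indices $0\leq i\leq j\leq n$, $\mathrm{midd}_{i,j}(x)$ is the string obtained from $x$ by deleting its first $i$ symbols and its last $n-j$ symbols (so it has length $j-i$). For a fixed $S\subseteq\Sigma^n$, an index $i$ and a string $u\in\Sigma^{j}$ with $i+j\leq n$, $S_{i,u}=\{x\in S\mid u=\mathrm{midd}_{i,i+j}(x)\}$. *)

theory Defs
  imports Complex_Main
begin

datatype ('n, 'a) sym = NT 'n | Tm 'a

definition derive1 :: "('n \<times> ('n, 'a) sym list) set \<Rightarrow> ('n, 'a) sym list \<Rightarrow> ('n, 'a) sym list \<Rightarrow> bool" where
  "derive1 P u v \<longleftrightarrow> (\<exists>l A r w. (A, w) \<in> P \<and> u = l @ [NT A] @ r \<and> v = l @ w @ r)"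

definition derives :: "('n \<times> ('n, 'a) sym list) set \<Rightarrow> ('n, 'a) sym list \<Rightarrow> ('n, 'a) sym list \<Rightarrow> bool" where
  "derives P = (derive1 P)\<^sup>*\<^sup>*"

definition Lang :: "('n \<times> ('n, 'a) sym list) set \<Rightarrow> 'n \<Rightarrow> 'a list set" where
  "Lang P S = {w. derives P [NT S] (map Tm w)}"

text \<open>A language is context-free if it is generated by a finite grammar
  (nonterminals w.l.o.g. natural numbers).\<close>
definition context_free :: "'a list set \<Rightarrow> bool" where
  "context_free L \<longleftrightarrow> (\<exists>(P :: (nat \<times> (nat, 'a) sym list) set) S. finite P \<and> L = Lang P S)"

text \<open>midd i j x: delete first i symbols and last (length x - j) symbols.\<close>
definition midd :: "nat \<Rightarrow> nat \<Rightarrow> 'a list \<Rightarrow> 'a list" where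
  "midd i j x = take (j - i) (drop i x)"

definition Sslice :: "'a list set \<Rightarrow> nat \<Rightarrow> 'a list \<Rightarrow> 'a list set" where
  "Sslice S i u = {x \<in> S. u = midd i (i + length u) x}"

end

theory Submission
  imports Defs "HOL-Library.Sublist" "HOL-Library.Product_Lexorder"
begin

text \<open>Fix a finite grammar for \<open>L\<close> and call an infix of a right-hand side (or the start symbol) a
  piece; there are finitely many. Descending the derivation tree of a word \<open>x\<close>, always into a
  factor whose yield still has length at least \<open>j0\<close>, ends at a piece that produces an infix of
  \<open>x\<close> of length between \<open>j0\<close> and \<open>k\<close>, since \<open>k \<ge> 2 * j0\<close>. If two words of \<open>S\<close> produce their
  windows at the same position, of the same length, from the same piece, then the windows can be
  exchanged within \<open>L\<close>. Sorting \<open>S\<close> by window, piece, and the letters at positions 0 and \<open>j0\<close>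
  gives at most \<open>m * (k - j0 + 1) * (n - j0 + 1)\<close> classes, where \<open>m\<close> is the number of pieces
  times \<open>card Sigma ^ 2\<close>. As every slice \<open>S_{i,u}\<close> is smaller than \<open>card S\<close> divided by this
  bound, some class contains two words that differ on their window.\<close>

section \<open>Derivations\<close>

lemma derive1_in_context: "derive1 P u v \<Longrightarrow> derive1 P (l @ u @ r) (l @ v @ r)"
  unfolding derive1_def by (metis append.assoc)

lemma derives_in_context: "derives P u v \<Longrightarrow> derives P (l @ u @ r) (l @ v @ r)"
  unfolding derives_def
  by (induction rule: rtranclp_induct) (auto intro: rtranclp.rtrancl_into_rtrancl derive1_in_context)

lemma derives_refl: "derives P u u"
  unfolding derives_def by simp

lemma derives_trans: "derives P u v \<Longrightarrow> derives P v w \<Longrightarrow> derives P u w"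
  unfolding derives_def by (rule rtranclp_trans)

lemma derives_append: "derives P u v \<Longrightarrow> derives P u' v' \<Longrightarrow> derives P (u @ u') (v @ v')"
  using derives_in_context[of P u v "[]" u'] derives_in_context[of P u' v' v "[]"]
  by (auto intro: derives_trans)

lemma relpowp_derive1_imp_derives: "(derive1 P ^^ N) u v \<Longrightarrow> derives P u v"
  unfolding derives_def by (rule relpowp_imp_rtranclp)

lemma derive1_NT_iff: "derive1 P [NT A] w \<longleftrightarrow> (A, w) \<in> P"
  unfolding derive1_def by (auto simp: Cons_eq_append_conv)

lemma not_derive1_map_Tm: "\<not> derive1 P (map Tm w) v"
  unfolding derive1_def by (auto simp: map_eq_append_conv)

lemma relpowp_derive1_map_Tm:
  assumes "(derive1 P ^^ N) (map Tm w) v"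
  shows "v = map Tm w"
proof (cases N)
  case (Suc M)
  with assms obtain x where "derive1 P (map Tm w) x" by (metis relpowp_Suc_D2)
  then show ?thesis by (simp add: not_derive1_map_Tm)
qed (use assms in simp)

lemma derive1_append_split:
  assumes "derive1 P (u @ v) w"
  shows "(\<exists>u'. derive1 P u u' \<and> w = u' @ v) \<or> (\<exists>v'. derive1 P v v' \<and> w = u @ v')"
proof -
  obtain l A r rhs where prod: "(A, rhs) \<in> P" and uv: "u @ v = l @ [NT A] @ r"
    and w: "w = l @ rhs @ r"
    using assms unfolding derive1_def by blast
  from uv obtain us where "u = l @ us \<and> us @ v = [NT A] @ r \<or> u @ us = l \<and> v = us @ [NT A] @ r"
    by (auto simp: append_eq_append_conv2)
  then consider (left) r' where "u = l @ [NT A] @ r'" "r = r' @ v"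
    | (right) l' where "v = l' @ [NT A] @ r" "l = u @ l'"
    by (cases us) auto
  then show ?thesis
  proof cases
    case left
    then have "derive1 P u (l @ rhs @ r')" using prod unfolding derive1_def by blast
    then show ?thesis using left w by auto
  next
    case right
    then have "derive1 P v (l' @ rhs @ r)" using prod unfolding derive1_def by blast
    then show ?thesis using right w by auto
  qed
qed

lemma relpowp_derive1_append_split:
  "(derive1 P ^^ N) (u @ v) w \<Longrightarrow>
    \<exists>N1 N2 w1 w2. w = w1 @ w2 \<and> N1 + N2 = N \<and> (derive1 P ^^ N1) u w1 \<and> (derive1 P ^^ N2) v w2"
proof (induction N arbitrary: u v)
  case 0
  then show ?case by force
next
  case (Suc N)
  then obtain x where step: "derive1 P (u @ v) x" and rest: "(derive1 P ^^ N) x w"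
    by (metis relpowp_Suc_D2)
  from derive1_append_split[OF step] show ?case
  proof (elim disjE exE conjE)
    fix u' assume "derive1 P u u'" "x = u' @ v"
    with Suc.IH[of u' v] rest show ?case
      by (metis add_Suc relpowp_Suc_I2)
  next
    fix v' assume "derive1 P v v'" "x = u @ v'"
    with Suc.IH[of u v'] rest show ?case
      by (metis add_Suc_right relpowp_Suc_I2)
  qed
qed

lemma relpowp_derive1_append_map_Tm:
  assumes "(derive1 P ^^ N) (u @ v) (map Tm w)"
  obtains N1 N2 w1 w2 where "w = w1 @ w2" "N1 + N2 = N"
    "(derive1 P ^^ N1) u (map Tm w1)" "(derive1 P ^^ N2) v (map Tm w2)"
proof -
  obtain N1 N2 v1 v2 where "map Tm w = v1 @ v2" "N1 + N2 = N"
    and "(derive1 P ^^ N1) u v1" "(derive1 P ^^ N2) v v2"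
    using relpowp_derive1_append_split[OF assms] by blast
  moreover from \<open>map Tm w = v1 @ v2\<close> obtain w1 w2 where "w = w1 @ w2" "v1 = map Tm w1" "v2 = map Tm w2"
    by (auto simp: map_eq_append_conv)
  ultimately show thesis
    using that by simp
qed

lemma relpowp_derive1_NT:
  assumes "(derive1 P ^^ N) [NT A] (map Tm w)"
  obtains M rhs where "N = Suc M" "(A, rhs) \<in> P" "(derive1 P ^^ M) rhs (map Tm w)"
proof (cases N)
  case 0
  with assms show thesis
    by (auto simp: map_eq_Cons_conv)
next
  case (Suc M)
  with assms obtain rhs where "derive1 P [NT A] rhs" "(derive1 P ^^ M) rhs (map Tm w)"
    by (metis relpowp_Suc_D2)
  with Suc show thesis
    by (simp add: derive1_NT_iff that)
qed

section \<open>Pieces of derivations\<close>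

definition pieces :: "('n \<times> ('n, 'a) sym list) set \<Rightarrow> 'n \<Rightarrow> ('n, 'a) sym list set" where
  "pieces P S = insert [NT S] {g. \<exists>(A, rhs) \<in> P. sublist g rhs}"

lemma finite_pieces: "finite P \<Longrightarrow> finite (pieces P S)"
proof -
  have "pieces P S = insert [NT S] (\<Union>(A, rhs) \<in> P. set (sublists rhs))"
    unfolding pieces_def by force
  then show "finite P \<Longrightarrow> finite (pieces P S)" by auto
qed

lemma rhs_in_pieces: "(A, rhs) \<in> P \<Longrightarrow> rhs \<in> pieces P S"
  unfolding pieces_def by auto

lemma pieces_Cons_Cons:
  assumes "s # t # u \<in> pieces P S"
  shows "[s] \<in> pieces P S" "t # u \<in> pieces P S"
proof -
  obtain A rhs where "(A, rhs) \<in> P" "sublist (s # t # u) rhs"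
    using assms unfolding pieces_def by auto
  moreover have "sublist [s] (s # t # u)" "sublist (t # u) (s # t # u)"
    using sublist_append_rightI[of "[s]"] sublist_append_leftI[of _ "[s]"] by simp_all
  ultimately have "sublist [s] rhs" "sublist (t # u) rhs"
    by (auto intro: sublist_order.order_trans)
  with \<open>(A, rhs) \<in> P\<close> show "[s] \<in> pieces P S" "t # u \<in> pieces P S"
    unfolding pieces_def by auto
qed

definition derives_via ::
  "('n \<times> ('n, 'a) sym list) set \<Rightarrow> ('n, 'a) sym list \<Rightarrow> ('n, 'a) sym list \<Rightarrow>
    'a list \<Rightarrow> 'a list \<Rightarrow> 'a list \<Rightarrow> bool" where
  "derives_via P al g x1 x2 x3 \<longleftrightarrow>
    (\<exists>b1 b2. derives P al (b1 @ g @ b2) \<and> derives P b1 (map Tm x1) \<and>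
      derives P g (map Tm x2) \<and> derives P b2 (map Tm x3))"

lemma derives_via_self: "derives P g (map Tm w) \<Longrightarrow> derives_via P g g [] w []"
  unfolding derives_via_def by (auto intro!: exI[of _ "[]"] derives_refl)

lemma derives_via_trans:
  "derives P al al' \<Longrightarrow> derives_via P al' g x1 x2 x3 \<Longrightarrow> derives_via P al g x1 x2 x3"
  unfolding derives_via_def by (meson derives_trans)

lemma derives_via_append_right:
  assumes "derives_via P u g x1 x2 x3" "derives P v (map Tm z)"
  shows "derives_via P (u @ v) g x1 x2 (x3 @ z)"
proof -
  obtain b1 b2 where b: "derives P u (b1 @ g @ b2)" "derives P b1 (map Tm x1)"
    "derives P g (map Tm x2)" "derives P b2 (map Tm x3)"
    using assms(1) unfolding derives_via_def by blast
  have "derives P (u @ v) (b1 @ g @ (b2 @ v))"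
    using derives_append[OF b(1) derives_refl] by simp
  moreover have "derives P (b2 @ v) (map Tm (x3 @ z))"
    using derives_append[OF b(4) assms(2)] by simp
  ultimately show ?thesis
    using b(2,3) unfolding derives_via_def by blast
qed

lemma derives_via_append_left:
  assumes "derives P u (map Tm z)" "derives_via P v g x1 x2 x3"
  shows "derives_via P (u @ v) g (z @ x1) x2 x3"
proof -
  obtain b1 b2 where b: "derives P v (b1 @ g @ b2)" "derives P b1 (map Tm x1)"
    "derives P g (map Tm x2)" "derives P b2 (map Tm x3)"
    using assms(2) unfolding derives_via_def by blast
  have "derives P (u @ v) ((u @ b1) @ g @ b2)"
    using derives_append[OF derives_refl b(1)] by simp
  moreover have "derives P (u @ b1) (map Tm (z @ x1))"
    using derives_append[OF assms(1) b(2)] by simp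
  ultimately show ?thesis
    using b(3,4) unfolding derives_via_def by blast
qed

lemma derives_via_exchange:
  assumes "derives_via P al g x1 x2 x3" "derives P g (map Tm y)"
  shows "derives P al (map Tm (x1 @ y @ x3))"
proof -
  obtain b1 b2 where b: "derives P al (b1 @ g @ b2)" "derives P b1 (map Tm x1)"
    "derives P b2 (map Tm x3)"
    using assms(1) unfolding derives_via_def by blast
  have "derives P (b1 @ g @ b2) (map Tm x1 @ map Tm y @ map Tm x3)"
    using b(2,3) assms(2) by (intro derives_append)
  with b(1) show ?thesis
    by (auto intro: derives_trans)
qed

text \<open>Descend the derivation tree: expand a single nonterminal, or split a longer piece into its
  first symbol and the rest and follow a factor whose yield still has length at least \<open>j0\<close>;
  since \<open>2 * j0 \<le> k\<close>, one of the two factors of a yield longer than \<open>k\<close> qualifies.\<close>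
lemma derives_via_short_piece:
  assumes "(derive1 P ^^ N) al (map Tm w)" "al \<in> pieces P S" "j0 \<le> length w"
    and "2 * j0 \<le> k" "0 < k"
  shows "\<exists>g x1 x2 x3. g \<in> pieces P S \<and> w = x1 @ x2 @ x3 \<and> j0 \<le> length x2 \<and> length x2 \<le> k \<and>
    derives_via P al g x1 x2 x3"
  using assms(1-3)
proof (induction "(N, length al)" arbitrary: N al w rule: less_induct)
  case less
  show ?case
  proof (cases "length w \<le> k")
    case True
    moreover have "derives_via P al al [] w []"
      using less.prems(1) by (intro derives_via_self relpowp_derive1_imp_derives)
    ultimately show ?thesis
      using less.prems(2,3) by (intro exI[of _ al] exI[of _ "[]"] exI[of _ w]) auto
  next
    case long: False
    consider (Nil) "al = []" | (Tm) a where "al = [Tm a]" | (NT) A where "al = [NT A]"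
      | (Cons_Cons) s t u where "al = s # t # u"
      by (metis list.exhaust sym.exhaust)
    then show ?thesis
    proof cases
      case Nil
      then have "map Tm w = []"
        using less.prems(1) relpowp_derive1_map_Tm[of N P "[]" "map Tm w"] by simp
      with long show ?thesis by simp
    next
      case Tm
      then have "map Tm w = [Tm a]"
        using less.prems(1) relpowp_derive1_map_Tm[of N P "[a]" "map Tm w"] by auto
      with long \<open>0 < k\<close> show ?thesis by auto
    next
      case NT
      then obtain M rhs where "N = Suc M" "(A, rhs) \<in> P" and rest: "(derive1 P ^^ M) rhs (map Tm w)"
        using less.prems(1) relpowp_derive1_NT by metis
      then have "rhs \<in> pieces P S" "(M, length rhs) < (N, length al)"
        by (simp_all add: rhs_in_pieces)
      then obtain g x1 x2 x3 where "g \<in> pieces P S" "w = x1 @ x2 @ x3" "j0 \<le> length x2"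
        "length x2 \<le> k" "derives_via P rhs g x1 x2 x3"
        using less.hyps[OF _ rest _ less.prems(3)] by blast
      moreover have "derives P al rhs"
        using \<open>(A, rhs) \<in> P\<close> NT unfolding derives_def by (simp add: derive1_NT_iff r_into_rtranclp)
      ultimately show ?thesis
        by (blast intro: derives_via_trans)
    next
      case Cons_Cons
      with less.prems(1) have "(derive1 P ^^ N) ([s] @ t # u) (map Tm w)"
        by simp
      then obtain N1 N2 w1 w2 where w: "w = w1 @ w2" and N: "N1 + N2 = N"
        and d1: "(derive1 P ^^ N1) [s] (map Tm w1)" and d2: "(derive1 P ^^ N2) (t # u) (map Tm w2)"
        by (rule relpowp_derive1_append_map_Tm)
      have pieces: "[s] \<in> pieces P S" "t # u \<in> pieces P S"
        using pieces_Cons_Cons less.prems(2) Cons_Cons by simp_all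
      have shorter: "(N1, length [s]) < (N, length al)" "(N2, length (t # u)) < (N, length al)"
        using N Cons_Cons by (auto simp: less_prod_def)
      show ?thesis
      proof (cases "j0 \<le> length w1")
        case True
        then obtain g x1 x2 x3 where "g \<in> pieces P S" "w1 = x1 @ x2 @ x3" "j0 \<le> length x2"
          "length x2 \<le> k" "derives_via P [s] g x1 x2 x3"
          using less.hyps[OF shorter(1) d1 pieces(1)] by blast
        moreover note derives_via_append_right[OF \<open>derives_via P [s] g x1 x2 x3\<close>
            relpowp_derive1_imp_derives[OF d2]]
        ultimately show ?thesis
          using w Cons_Cons by (intro exI[of _ g] exI[of _ x1] exI[of _ x2] exI[of _ "x3 @ w2"]) auto
      next
        case False
        with long w \<open>2 * j0 \<le> k\<close> have "j0 \<le> length w2" by simp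
        then obtain g x1 x2 x3 where "g \<in> pieces P S" "w2 = x1 @ x2 @ x3" "j0 \<le> length x2"
          "length x2 \<le> k" "derives_via P (t # u) g x1 x2 x3"
          using less.hyps[OF shorter(2) d2 pieces(2)] by blast
        moreover note derives_via_append_left[OF relpowp_derive1_imp_derives[OF d1]
            \<open>derives_via P (t # u) g x1 x2 x3\<close>]
        ultimately show ?thesis
          using w Cons_Cons by (intro exI[of _ g] exI[of _ "w1 @ x1"] exI[of _ x2] exI[of _ x3]) auto
      qed
    qed
  qed
qed

lemma derives_via_start_symbol:
  assumes "x \<in> Lang P S" "j0 \<le> length x" "2 * j0 \<le> k" "0 < k"
  shows "\<exists>i j g. g \<in> pieces P S \<and> j0 \<le> j \<and> j \<le> k \<and> i + j \<le> length x \<and>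
    derives_via P [NT S] g (take i x) (take j (drop i x)) (drop (i + j) x)"
proof -
  obtain N where derivation: "(derive1 P ^^ N) [NT S] (map Tm x)"
    using assms(1) unfolding Lang_def derives_def by (auto dest: rtranclp_imp_relpowp)
  have "[NT S] \<in> pieces P S"
    unfolding pieces_def by simp
  from derives_via_short_piece[OF derivation this assms(2-4)]
  obtain g x1 x2 x3 where "g \<in> pieces P S" "x = x1 @ x2 @ x3" "j0 \<le> length x2"
    "length x2 \<le> k" "derives_via P [NT S] g x1 x2 x3"
    by blast
  then show ?thesis
    by (intro exI[of _ "length x1"] exI[of _ "length x2"] exI[of _ g]) auto
qed

section \<open>Exchanging windows\<close>

definition graft :: "nat \<Rightarrow> nat \<Rightarrow> 'a list \<Rightarrow> 'a list \<Rightarrow> 'a list" where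
  "graft p q x y = take p x @ take (q - p) (drop p y) @ drop q x"

lemma graft_in_Lang:
  assumes "derives_via P [NT S] g (take i x) (take j (drop i x)) (drop (i + j) x)"
    and "derives_via P [NT S] g (take i y) (take j (drop i y)) (drop (i + j) y)"
  shows "graft i (i + j) x y \<in> Lang P S"
proof -
  have "derives P g (map Tm (take j (drop i y)))"
    using assms(2) unfolding derives_via_def by blast
  with assms(1) have "derives P [NT S] (map Tm (take i x @ take j (drop i y) @ drop (i + j) x))"
    by (rule derives_via_exchange)
  then show ?thesis
    unfolding Lang_def graft_def by simp
qed

lemma length_graft: "length x = length y \<Longrightarrow> p \<le> q \<Longrightarrow> q \<le> length x \<Longrightarrow> length (graft p q x y) = length x"
  unfolding graft_def by simp

lemma nth_graft:
  assumes "length x = length y" "p \<le> q" "q \<le> length x" "t < length x"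
  shows "graft p q x y ! t = (if p \<le> t \<and> t < q then y ! t else x ! t)"
  using assms unfolding graft_def by (auto simp: nth_append min_def)

lemma graft_same: "p \<le> q \<Longrightarrow> graft p q x x = x"
  unfolding graft_def
  using append_take_drop_id[of "q - p" "drop p x"] append_take_drop_id[of p x] by simp

lemma graft_cong:
  assumes "length x = length y" "p \<le> q" "q \<le> length x" "p' \<le> q'" "q' \<le> length x"
    and "\<And>t. t < length x \<Longrightarrow> (p \<le> t \<and> t < q) \<noteq> (p' \<le> t \<and> t < q') \<Longrightarrow> x ! t = y ! t"
  shows "graft p q x y = graft p' q' x y"
  using assms by (intro nth_equalityI) (auto simp: length_graft nth_graft)

text \<open>Only positions 0 and \<open>j0\<close> change sides when the window moves.\<close>
lemma graft_shift_from_zero: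
  assumes "length x = length y" "x ! 0 = y ! 0" "x ! j0 = y ! j0"
    and "j0 \<le> j" "i + j \<le> length x" "j0 < length x"
  shows "graft (max i 1) (max (i + j) (j0 + 1)) x y = graft i (i + j) x y"
proof (rule graft_cong)
  fix t
  assume "(max i 1 \<le> t \<and> t < max (i + j) (j0 + 1)) \<noteq> (i \<le> t \<and> t < i + j)"
  with assms(4) have "t = 0 \<or> t = j0"
    by (cases "i = 0") auto
  with assms(2,3) show "x ! t = y ! t" by auto
qed (use assms in auto)

section \<open>Counting\<close>

lemma exists_large_fiber:
  assumes "finite S" "S \<noteq> {}" "finite C" "f ` S \<subseteq> C"
  shows "\<exists>x\<in>S. card S \<le> card C * card {y \<in> S. f y = f x}"
proof (rule ccontr)
  assume no_large: "\<not> ?thesis"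
  have small: "card C * card {y \<in> S. f y = c} < card S" if "c \<in> f ` S" for c
  proof -
    from that obtain x where "x \<in> S" "c = f x"
      by blast
    with no_large show ?thesis
      by (simp add: not_le)
  qed
  have "card (\<Union>c \<in> f ` S. {y \<in> S. f y = c}) \<le> (\<Sum>c \<in> f ` S. card {y \<in> S. f y = c})"
    using assms(1) by (intro card_UN_le) simp
  moreover have "(\<Union>c \<in> f ` S. {y \<in> S. f y = c}) = S"
    by auto
  ultimately have "card C * card S \<le> card C * (\<Sum>c \<in> f ` S. card {y \<in> S. f y = c})"
    by simp
  also have "\<dots> = (\<Sum>c \<in> f ` S. card C * card {y \<in> S. f y = c})"
    by (simp add: sum_distrib_left)
  also have "\<dots> < (\<Sum>c \<in> f ` S. card S)"
    using small assms(1,2) by (intro sum_strict_mono) auto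
  also have "\<dots> = card (f ` S) * card S"
    by simp
  also have "\<dots> \<le> card C * card S"
    using card_mono[OF assms(3,4)] by simp
  finally show False
    by simp
qed

lemma exists_same_class_distinct_midd:
  assumes "finite S" "S \<noteq> {}" "finite C" "f ` S \<subseteq> C"
    and fits: "\<And>x. x \<in> S \<Longrightarrow> p x + l \<le> length x"
    and slices: "\<And>x. x \<in> S \<Longrightarrow> card C * card (Sslice S (p x) (midd (p x) (p x + l) x)) < card S"
  shows "\<exists>x\<in>S. \<exists>y\<in>S. f x = f y \<and> midd (p x) (p x + l) x \<noteq> midd (p x) (p x + l) y"
proof (rule ccontr)
  assume same: "\<not> ?thesis"
  obtain x where x: "x \<in> S" and large: "card S \<le> card C * card {y \<in> S. f y = f x}"
    using exists_large_fiber[OF assms(1-4)] by blast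
  define u where "u = midd (p x) (p x + l) x"
  have "length u = l"
    using fits[OF x] unfolding u_def midd_def by simp
  have "{y \<in> S. f y = f x} \<subseteq> Sslice S (p x) u"
  proof
    fix y
    assume y: "y \<in> {y \<in> S. f y = f x}"
    then have "y \<in> S" "f x = f y"
      by auto
    with same x have "u = midd (p x) (p x + l) y"
      unfolding u_def by blast
    with y \<open>length u = l\<close> show "y \<in> Sslice S (p x) u"
      unfolding Sslice_def by simp
  qed
  then have "card {y \<in> S. f y = f x} \<le> card (Sslice S (p x) u)"
    using assms(1) unfolding Sslice_def by (intro card_mono) auto
  then have "card S \<le> card C * card (Sslice S (p x) u)"
    using large by (meson le_trans mult_le_mono2)
  with slices[OF x] show False
    unfolding u_def by simp
qed

lemma less_divide_imp_mult_less:
  fixes a b d :: nat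
  assumes "real a < real b / real d"
  shows "d * a < b"
proof -
  have "d > 0"
    using assms by (cases "d = 0") auto
  with assms have "real (d * a) < real b"
    by (simp add: field_simps)
  then show ?thesis
    by linarith
qed

text \<open>The infix of length \<open>j0\<close> is read at \<open>max (pos x) 1\<close>, since the slice hypothesis says
  nothing about position 0.\<close>
lemma exists_same_class_distinct_infixes:
  fixes Sigma :: "'a set" and C :: "'c set"
    and pos wid :: "'a list \<Rightarrow> nat" and piece :: "'a list \<Rightarrow> 'c"
  assumes "finite Sigma" "Sigma \<noteq> {}" "finite C"
    and words: "S \<subseteq> {x. x \<in> lists Sigma \<and> length x = n}"
    and "j0 < n" "j0 \<le> k"
    and window: "\<And>x. x \<in> S \<Longrightarrow> piece x \<in> C \<and> j0 \<le> wid x \<and> wid x \<le> k \<and> pos x + wid x \<le> n"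
    and slices: "\<forall>i \<in> {1..n - j0}. \<forall>u. u \<in> lists Sigma \<and> length u = j0 \<longrightarrow>
      real (card (Sslice S i u))
        < real (card S) / (real (card C * card Sigma ^ 2) * real (k - j0 + 1) * real (n - j0 + 1))"
  obtains x y where "x \<in> S" "y \<in> S" "(pos x, wid x, piece x) = (pos y, wid y, piece y)"
    "x ! 0 = y ! 0" "x ! j0 = y ! j0"
    "midd (max (pos x) 1) (max (pos x) 1 + j0) x \<noteq> midd (max (pos x) 1) (max (pos x) 1 + j0) y"
proof -
  define key where "key x = ((pos x, wid x, piece x), x ! 0, x ! j0)" for x
  define K where "K = ({0..n - j0} \<times> {j0..k} \<times> C) \<times> Sigma \<times> Sigma"
  have "finite S"
  proof (rule finite_subset)
    show "S \<subseteq> {xs. set xs \<subseteq> Sigma \<and> length xs = n}"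
      using words by auto
  qed (rule finite_lists_length_eq[OF \<open>finite Sigma\<close>])
  have "finite K"
    unfolding K_def using assms(1,3) by simp
  have "card {0..n - j0} = n - j0 + 1" "card {j0..k} = k - j0 + 1"
    using \<open>j0 \<le> k\<close> by simp_all
  then have "card K = card C * card Sigma ^ 2 * (k - j0 + 1) * (n - j0 + 1)"
    unfolding K_def card_cartesian_product power2_eq_square by (simp only: mult_ac)
  then have "real (card C * card Sigma ^ 2) * real (k - j0 + 1) * real (n - j0 + 1) = real (card K)"
    by (simp only: of_nat_mult)
  note slices = slices[unfolded this]
  have slice_small: "card K * card (Sslice S i u) < card S"
    if "i \<in> {1..n - j0}" "u \<in> lists Sigma" "length u = j0" for i u
    using slices[rule_format, OF that(1) conjI[OF that(2,3)]] by (rule less_divide_imp_mult_less)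
  have "key ` S \<subseteq> K"
  proof
    fix z
    assume "z \<in> key ` S"
    then obtain x where x: "x \<in> S" "z = key x"
      by blast
    have "set x \<subseteq> Sigma" "length x = n"
      using words x(1) by auto
    then have "x ! 0 \<in> Sigma" "x ! j0 \<in> Sigma"
      using nth_mem[of 0 x] nth_mem[of j0 x] \<open>j0 < n\<close> by (auto simp del: nth_mem)
    with window[OF x(1)] show "z \<in> K"
      unfolding x(2) key_def K_def by auto
  qed
  obtain a where "a \<in> Sigma"
    using \<open>Sigma \<noteq> {}\<close> by blast
  then have "card K * card (Sslice S 1 (replicate j0 a)) < card S"
    using \<open>j0 < n\<close> by (intro slice_small) auto
  then have "S \<noteq> {}"
    by auto
  have "\<exists>x\<in>S. \<exists>y\<in>S. key x = key y \<and> midd (max (pos x) 1) (max (pos x) 1 + j0) x \<noteq>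
    midd (max (pos x) 1) (max (pos x) 1 + j0) y"
  proof (rule exists_same_class_distinct_midd[OF \<open>finite S\<close> \<open>S \<noteq> {}\<close> \<open>finite K\<close> \<open>key ` S \<subseteq> K\<close>])
    fix x
    assume x: "x \<in> S"
    then have "max (pos x) 1 \<in> {1..n - j0}" "x \<in> lists Sigma" "length x = n"
      using window[OF x] words \<open>j0 < n\<close> by auto
    then show "max (pos x) 1 + j0 \<le> length x"
      "card K * card (Sslice S (max (pos x) 1) (midd (max (pos x) 1) (max (pos x) 1 + j0) x)) < card S"
      unfolding midd_def by (auto intro!: slice_small dest: in_set_takeD in_set_dropD)
  qed
  then obtain x y where xy: "x \<in> S" "y \<in> S" and "key x = key y"
    and differ: "midd (max (pos x) 1) (max (pos x) 1 + j0) x \<noteq> midd (max (pos x) 1) (max (pos x) 1 + j0) y"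
    by blast
  then have "(pos x, wid x, piece x) = (pos y, wid y, piece y)" "x ! 0 = y ! 0" "x ! j0 = y ! j0"
    unfolding key_def by simp_all
  from xy this differ show thesis
    by (rule that)
qed

text \<open>The conclusion asks for a window starting at a position \<open>\<ge> 1\<close>, so a window at position 0 is
  moved to position 1 by \<open>graft_shift_from_zero\<close>.\<close>
lemma exists_distinct_exchangeable_infixes:
  fixes Sigma :: "'a set" and C :: "'c set"
    and pos wid :: "'a list \<Rightarrow> nat" and piece :: "'a list \<Rightarrow> 'c"
  assumes "finite Sigma" "Sigma \<noteq> {}" "finite C"
    and words: "S \<subseteq> {x. x \<in> lists Sigma \<and> length x = n}"
    and "j0 < n" "j0 \<le> k"
    and window: "\<And>x. x \<in> S \<Longrightarrow> piece x \<in> C \<and> j0 \<le> wid x \<and> wid x \<le> k \<and> pos x + wid x \<le> n"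
    and exchange: "\<And>x y. x \<in> S \<Longrightarrow> y \<in> S \<Longrightarrow> (pos x, wid x, piece x) = (pos y, wid y, piece y) \<Longrightarrow>
      graft (pos x) (pos x + wid x) x y \<in> L"
    and slices: "\<forall>i \<in> {1..n - j0}. \<forall>u. u \<in> lists Sigma \<and> length u = j0 \<longrightarrow>
      real (card (Sslice S i u))
        < real (card S) / (real (card C * card Sigma ^ 2) * real (k - j0 + 1) * real (n - j0 + 1))"
  shows "\<exists>i j x1 x2 x3 y1 y2 y3.
    i \<in> {1..n} \<and> j \<in> {j0..k} \<and> i + j \<le> n \<and>
    x1 @ x2 @ x3 \<in> S \<and> y1 @ y2 @ y3 \<in> S \<and>
    length x1 = i \<and> length y1 = i \<and> length x2 = j \<and> length y2 = j \<and>
    length x3 = length y3 \<and>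
    x2 \<noteq> y2 \<and> x1 @ y2 @ x3 \<in> L \<and> y1 @ x2 @ y3 \<in> L"
proof -
  obtain x y where "x \<in> S" "y \<in> S" and same: "(pos x, wid x, piece x) = (pos y, wid y, piece y)"
    "x ! 0 = y ! 0" "x ! j0 = y ! j0"
    and differ: "midd (max (pos x) 1) (max (pos x) 1 + j0) x \<noteq> midd (max (pos x) 1) (max (pos x) 1 + j0) y"
    by (rule exists_same_class_distinct_infixes[OF assms(1-6) window slices])
  define p where "p = max (pos x) 1"
  define q where "q = max (pos x + wid x) (j0 + 1)"
  have "length x = n" "length y = n"
    using words \<open>x \<in> S\<close> \<open>y \<in> S\<close> by auto
  have pq: "1 \<le> p" "p + j0 \<le> q" "q \<le> n" "q - p \<le> k"
    using window[OF \<open>x \<in> S\<close>] \<open>j0 < n\<close> \<open>j0 \<le> k\<close> unfolding p_def q_def by auto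
  have "graft p q x y = graft (pos x) (pos x + wid x) x y"
    "graft p q y x = graft (pos y) (pos y + wid y) y x"
    unfolding p_def q_def
    using graft_shift_from_zero[of x y j0 "wid x" "pos x"] graft_shift_from_zero[of y x j0 "wid x" "pos x"]
      window[OF \<open>x \<in> S\<close>] same \<open>length x = n\<close> \<open>length y = n\<close> \<open>j0 < n\<close>
    by auto
  moreover have "graft (pos x) (pos x + wid x) x y \<in> L" "graft (pos y) (pos y + wid y) y x \<in> L"
    using exchange[OF \<open>x \<in> S\<close> \<open>y \<in> S\<close>] exchange[OF \<open>y \<in> S\<close> \<open>x \<in> S\<close>] same by simp_all
  ultimately have exchanged: "graft p q x y \<in> L" "graft p q y x \<in> L"
    by simp_all
  have distinct: "take (q - p) (drop p x) \<noteq> take (q - p) (drop p y)"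
  proof
    assume "take (q - p) (drop p x) = take (q - p) (drop p y)"
    then have "take j0 (take (q - p) (drop p x)) = take j0 (take (q - p) (drop p y))"
      by simp
    with differ \<open>p + j0 \<le> q\<close> show False
      unfolding midd_def p_def[symmetric] by (simp add: min_absorb1)
  qed
  have decompose: "take p z @ take (q - p) (drop p z) @ drop q z = z" for z
    using graft_same[of p q z] pq unfolding graft_def by simp
  show ?thesis
    apply (rule exI[of _ p], rule exI[of _ "q - p"], rule exI[of _ "take p x"],
        rule exI[of _ "take (q - p) (drop p x)"], rule exI[of _ "drop q x"],
        rule exI[of _ "take p y"], rule exI[of _ "take (q - p) (drop p y)"],
        rule exI[of _ "drop q y"], intro conjI)
    using distinct exchanged pq \<open>x \<in> S\<close> \<open>y \<in> S\<close> \<open>length x = n\<close> \<open>length y = n\<close>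
    unfolding graft_def by (simp_all add: decompose)
qed

lemma exchangeable_windows:
  assumes "S \<subseteq> Lang P S0" "\<And>x. x \<in> S \<Longrightarrow> j0 \<le> length x" "2 * j0 \<le> k" "0 < k"
  obtains pos wid piece where
    "\<And>x. x \<in> S \<Longrightarrow> piece x \<in> pieces P S0 \<and> j0 \<le> wid x \<and> wid x \<le> k \<and> pos x + wid x \<le> length x"
    "\<And>x y. x \<in> S \<Longrightarrow> y \<in> S \<Longrightarrow> (pos x, wid x, piece x) = (pos y, wid y, piece y) \<Longrightarrow>
      graft (pos x) (pos x + wid x) x y \<in> Lang P S0"
proof -
  have "\<forall>x\<in>S. \<exists>i j g. g \<in> pieces P S0 \<and> j0 \<le> j \<and> j \<le> k \<and> i + j \<le> length x \<and>
    derives_via P [NT S0] g (take i x) (take j (drop i x)) (drop (i + j) x)"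
  proof
    fix x
    assume "x \<in> S"
    with assms(1,2) have "x \<in> Lang P S0" "j0 \<le> length x"
      by auto
    from derives_via_start_symbol[OF this assms(3,4)]
    show "\<exists>i j g. g \<in> pieces P S0 \<and> j0 \<le> j \<and> j \<le> k \<and> i + j \<le> length x \<and>
      derives_via P [NT S0] g (take i x) (take j (drop i x)) (drop (i + j) x)" .
  qed
  then obtain pos wid piece where window: "\<forall>x\<in>S. piece x \<in> pieces P S0 \<and> j0 \<le> wid x \<and>
    wid x \<le> k \<and> pos x + wid x \<le> length x \<and>
    derives_via P [NT S0] (piece x) (take (pos x) x) (take (wid x) (drop (pos x) x))
      (drop (pos x + wid x) x)"
    by metis
  show thesis
  proof (rule that[of piece wid pos])
    fix x y
    assume "x \<in> S" "y \<in> S" and same: "(pos x, wid x, piece x) = (pos y, wid y, piece y)"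
    with window have "derives_via P [NT S0] (piece x) (take (pos x) y) (take (wid x) (drop (pos x) y))
      (drop (pos x + wid x) y)"
      by auto
    with window \<open>x \<in> S\<close> show "graft (pos x) (pos x + wid x) x y \<in> Lang P S0"
      by (blast intro: graft_in_Lang)
  qed (use window in blast)
qed

theorem lemma4p1:
  fixes L :: "'a list set" and Sigma :: "'a set"
  assumes "finite Sigma" and "card Sigma \<ge> 2"
    and "L \<subseteq> lists Sigma" and "context_free L" and "infinite L"
  shows "\<exists>m::nat. m > 0 \<and>
    (\<forall>n::nat. \<forall>S j0 k.
       n \<ge> 2 \<longrightarrow> S \<subseteq> L \<inter> {x. x \<in> lists Sigma \<and> length x = n} \<longrightarrow>
       j0 \<in> {2..n} \<longrightarrow> k \<in> {2..n} \<longrightarrow> k \<ge> 2 * j0 \<longrightarrow>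
       (\<forall>i \<in> {1..n - j0}. \<forall>u. u \<in> lists Sigma \<and> length u = j0 \<longrightarrow>
          real (card (Sslice S i u))
            < real (card S) / (real m * real (k - j0 + 1) * real (n - j0 + 1))) \<longrightarrow>
       (\<exists>i j x1 x2 x3 y1 y2 y3.
          i \<in> {1..n} \<and> j \<in> {j0..k} \<and> i + j \<le> n \<and>
          x1 @ x2 @ x3 \<in> S \<and> y1 @ y2 @ y3 \<in> S \<and>
          length x1 = i \<and> length y1 = i \<and> length x2 = j \<and> length y2 = j \<and>
          length x3 = length y3 \<and>
          x2 \<noteq> y2 \<and> x1 @ y2 @ x3 \<in> L \<and> y1 @ x2 @ y3 \<in> L))"
proof -
  obtain P :: "(nat \<times> (nat, 'a) sym list) set" and S0 where "finite P" and L: "L = Lang P S0"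
    using assms(4) unfolding context_free_def by blast
  have "pieces P S0 \<noteq> {}" "Sigma \<noteq> {}"
    using assms(2) unfolding pieces_def by auto
  then have m_pos: "card (pieces P S0) * card Sigma ^ 2 > 0"
    using finite_pieces[OF \<open>finite P\<close>] \<open>finite Sigma\<close> by (simp add: card_gt_0_iff)
  show ?thesis
    apply (rule exI[of _ "card (pieces P S0) * card Sigma ^ 2"], rule conjI[OF m_pos], intro allI impI)
    subgoal premises prems for n S j0 k
    proof -
      have words: "S \<subseteq> {x. x \<in> lists Sigma \<and> length x = n}" and "S \<subseteq> Lang P S0"
        and "j0 < n" "j0 \<le> k" "2 * j0 \<le> k" "0 < k"
        using prems(2-5) L by auto
      have lengths: "j0 \<le> length x" if "x \<in> S" for x
        using words that \<open>j0 < n\<close> by auto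
      obtain pos wid piece where
        window: "\<And>x. x \<in> S \<Longrightarrow> piece x \<in> pieces P S0 \<and> j0 \<le> wid x \<and> wid x \<le> k \<and> pos x + wid x \<le> length x"
        and exchange: "\<And>x y. x \<in> S \<Longrightarrow> y \<in> S \<Longrightarrow> (pos x, wid x, piece x) = (pos y, wid y, piece y) \<Longrightarrow>
          graft (pos x) (pos x + wid x) x y \<in> Lang P S0"
        using exchangeable_windows[OF \<open>S \<subseteq> Lang P S0\<close> lengths \<open>2 * j0 \<le> k\<close> \<open>0 < k\<close>] by metis
      have "piece x \<in> pieces P S0 \<and> j0 \<le> wid x \<and> wid x \<le> k \<and> pos x + wid x \<le> n" if "x \<in> S" for x
        using window[OF that] words that by auto
      then show ?thesis
        unfolding L by (rule exists_distinct_exchangeable_infixes[OF assms(1) \<open>Sigma \<noteq> {}\<close>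
              finite_pieces[OF \<open>finite P\<close>] words \<open>j0 < n\<close> \<open>j0 \<le> k\<close> _ exchange prems(6)])
    qed
    done
qed

end
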